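(* Let $G\le S_n$ be fusion controlled and $T\in\mathcal T(G_0)$. (i) For every connected component $C$ of $\widetilde P_0(G)$ containing at least one vertex of type $T$, the number of components of $\widetilde P_0(G)$ containing at least one vertex of type $T$ equals $\dfrac{\mu_T(G)}{\phi(o(T))\,k_C(T)}$. (ii) If $T$ is isolated in $P_0(\mathcal T(G))$, this number equals $\dfrac{\mu_T(G)}{\phi(o(T))}$.
   Context: $G_0=G\setminus\{1\}$; $[x]=\{y:\langle y\rangle=\langle x\rangle\}$; $\widetilde P_0(G)$: vertex set $\{[x]:x\in G_0\}$, distinct $[x],[y]$ adjacent iff some representatives are one a positive power of the other. For $\psi\in S_n$, $T_\psi$ is the partition of $n$ given by orbit lengths of $\langle\psi\rangle$; the type of $[\psi]$ is $T_\psi$. For $T=[m_1^{t_1},\dots,m_k^{t_k}]$, $o(T)=\mathrm{lcm}(m_i)$ and $T^a=[(m_i/\gcd(a,m_i))^{t_i\gcd(a,m_i)}]_i$. $\mathcal T(G_0)=\{T_\psi:\psi\in G_0\}$; $P_0(\mathcal T(G))$: vertex set $\mathcal T(G_0)$, distinct $T,T'$ adjacent iff one is a power of the other. $\mu_T(G)$ is the number of elements of $G$ of type $T$; $\phi$ is Euler's totient; $k_C(T)$ is the number of vertices of $C$ of type $T$. $G$ is fusion controlled if for all $\psi\in G$, $x\in S_n$ with $x^{-1}\psi x\in G$ there is $y\in N_{S_n}(G)$ with $x^{-1}\psi x=y^{-1}\psi y$. *)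

theory Defs
  imports "HOL-Combinatorics.Permutations" "HOL-Library.Multiset" "HOL-Number_Theory.Totient"
begin

definition Sym :: "nat \<Rightarrow> (nat \<Rightarrow> nat) set" where
  "Sym n = {p. p permutes {1..n}}"

definition perm_subgroup :: "nat \<Rightarrow> (nat \<Rightarrow> nat) set \<Rightarrow> bool" where
  "perm_subgroup n G \<longleftrightarrow> G \<subseteq> Sym n \<and> id \<in> G \<and>
     (\<forall>p\<in>G. \<forall>q\<in>G. p \<circ> q \<in> G) \<and> (\<forall>p\<in>G. inv p \<in> G)"

definition conj_perm :: "(nat \<Rightarrow> nat) \<Rightarrow> (nat \<Rightarrow> nat) \<Rightarrow> (nat \<Rightarrow> nat)" where
  "conj_perm x p = inv x \<circ> p \<circ> x"

definition normalizer :: "nat \<Rightarrow> (nat \<Rightarrow> nat) set \<Rightarrow> (nat \<Rightarrow> nat) set" where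
  "normalizer n G = {y \<in> Sym n. conj_perm y ` G = G}"

definition fusion_controlled :: "nat \<Rightarrow> (nat \<Rightarrow> nat) set \<Rightarrow> bool" where
  "fusion_controlled n G \<longleftrightarrow>
     (\<forall>p\<in>G. \<forall>x\<in>Sym n. conj_perm x p \<in> G \<longrightarrow>
        (\<exists>y\<in>normalizer n G. conj_perm x p = conj_perm y p))"

text \<open>Cyclic subgroup generated by x (elements have finite order, so the
  positive powers already form the subgroup).\<close>
definition cyc :: "(nat \<Rightarrow> nat) \<Rightarrow> (nat \<Rightarrow> nat) set" where
  "cyc x = range (\<lambda>k. x ^^ k)"

definition cls :: "(nat \<Rightarrow> nat) set \<Rightarrow> (nat \<Rightarrow> nat) \<Rightarrow> (nat \<Rightarrow> nat) set" where
  "cls G x = {y \<in> G. cyc y = cyc x}"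

definition rpg_vertices :: "(nat \<Rightarrow> nat) set \<Rightarrow> (nat \<Rightarrow> nat) set set" where
  "rpg_vertices G = {cls G x | x. x \<in> G \<and> x \<noteq> id}"

definition rpg_adj :: "(nat \<Rightarrow> nat) set \<Rightarrow> (nat \<Rightarrow> nat) set \<Rightarrow> (nat \<Rightarrow> nat) set \<Rightarrow> bool" where
  "rpg_adj G X Y \<longleftrightarrow> X \<in> rpg_vertices G \<and> Y \<in> rpg_vertices G \<and> X \<noteq> Y \<and>
     (\<exists>x\<in>X. \<exists>y\<in>Y. \<exists>k>0. y = x ^^ k \<or> x = y ^^ k)"

definition rpg_components :: "(nat \<Rightarrow> nat) set \<Rightarrow> (nat \<Rightarrow> nat) set set set" where
  "rpg_components G =
     {{Y \<in> rpg_vertices G. (rpg_adj G)\<^sup>*\<^sup>* X Y} | X. X \<in> rpg_vertices G}"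

definition orbit_of :: "(nat \<Rightarrow> nat) \<Rightarrow> nat \<Rightarrow> nat set" where
  "orbit_of p i = range (\<lambda>k. (p ^^ k) i)"

definition perm_type :: "nat \<Rightarrow> (nat \<Rightarrow> nat) \<Rightarrow> nat multiset" where
  "perm_type n p = image_mset card (mset_set (orbit_of p ` {1..n}))"

definition type_order :: "nat multiset \<Rightarrow> nat" where
  "type_order T = Lcm (set_mset T)"

definition type_pow :: "nat multiset \<Rightarrow> nat \<Rightarrow> nat multiset" where
  "type_pow T a = \<Sum>\<^sub># (image_mset (\<lambda>m. replicate_mset (gcd a m) (m div gcd a m)) T)"

definition types0 :: "nat \<Rightarrow> (nat \<Rightarrow> nat) set \<Rightarrow> nat multiset set" where
  "types0 n G = {perm_type n p | p. p \<in> G \<and> p \<noteq> id}"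

definition type_isolated :: "nat \<Rightarrow> (nat \<Rightarrow> nat) set \<Rightarrow> nat multiset \<Rightarrow> bool" where
  "type_isolated n G T \<longleftrightarrow>
     (\<forall>T'\<in>types0 n G. T' \<noteq> T \<longrightarrow> \<not> (\<exists>a. T' = type_pow T a \<or> T = type_pow T' a))"

definition mu :: "nat \<Rightarrow> (nat \<Rightarrow> nat) set \<Rightarrow> nat multiset \<Rightarrow> nat" where
  "mu n G T = card {p \<in> G. perm_type n p = T}"

text \<open>vertex X has type T (all elements of a class have the same type)\<close>
definition vertex_has_type :: "nat \<Rightarrow> nat multiset \<Rightarrow> (nat \<Rightarrow> nat) set \<Rightarrow> bool" where
  "vertex_has_type n T X \<longleftrightarrow> (\<exists>p\<in>X. perm_type n p = T)"

definition kC :: "nat \<Rightarrow> (nat \<Rightarrow> nat) set set \<Rightarrow> nat multiset \<Rightarrow> nat" where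
  "kC n C T = card {X \<in> C. vertex_has_type n T X}"

end

theory Submission
  imports Defs "HOL-Combinatorics.Orbits" "HOL-Combinatorics.Cycles"
begin

text \<open>The class [x] consists of the generators x^k (k coprime to o(x)) of the cyclic group of x, all of
  the same type as x, so \<mu>_T(G) is \<phi>(o(T)) times the number of vertices of type T. Permutations of equal
  type are conjugate in S_n (match their cycles); by fusion control the conjugator can be chosen in the
  normalizer of G, and conjugation by the normalizer is an automorphism of the reduced power graph.
  Hence all components meeting type T contain equally many vertices of type T, and counting those
  vertices component by component gives (i). Adjacent vertices have distinct types that are powers of
  each other (equal types would force equal cyclic groups), so if T is isolated every vertex of type T
  is a component on its own, k_C(T) = 1, and (ii) follows.\<close>

section \<open>Orbits of a permutation\<close>

lemma orbit_of_eq_orbit: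
  assumes "permutation p" shows "orbit_of p i = orbit p i"
  unfolding orbit_of_def orbit_altdef_permutation[OF assms] by auto

lemma orbit_of_self: "i \<in> orbit_of p i"
  unfolding orbit_of_def by (metis funpow_0 rangeI)

lemma funpow_in_orbit_of: "(p ^^ k) i \<in> orbit_of p i"
  unfolding orbit_of_def by auto

lemma orbit_of_funpow_subset: "orbit_of (p ^^ k) i \<subseteq> orbit_of p i"
  unfolding orbit_of_def by (auto simp: funpow_mult)

lemma orbit_of_eq:
  assumes p: "permutation p" and j: "j \<in> orbit_of p i"
  shows "orbit_of p j = orbit_of p i"
proof -
  have ji: "j \<in> orbit p i" using j orbit_of_eq_orbit[OF p] by simp
  have "i \<in> orbit p j" by (rule orbit_swap[OF permutation_self_in_orbit[OF p] ji])
  then show ?thesis unfolding orbit_of_eq_orbit[OF p] using ji by (meson orbit_trans subsetI subset_antisym)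
qed

lemma orbit_of_step: "permutation p \<Longrightarrow> orbit_of p (p j) = orbit_of p j"
  using orbit_of_eq funpow_in_orbit_of[where k=1 and p=p and i=j] by simp

lemma orbit_of_subset_permutes:
  assumes "p permutes S" "i \<in> S" shows "orbit_of p i \<subseteq> S"
  using assms unfolding orbit_of_def by (auto intro: permutes_in_funpow_image)

lemma finite_orbit_of: "permutation p \<Longrightarrow> finite (orbit_of p i)"
  by (simp add: orbit_of_eq_orbit finite_orbit permutation_self_in_orbit)

lemma card_orbit_of:
  assumes "permutation p" shows "card (orbit_of p i) = funpow_dist1 p i i"
proof -
  have i: "i \<in> orbit p i" using permutation_self_in_orbit[OF assms] .
  show ?thesis
    unfolding orbit_of_eq_orbit[OF assms] orbit_conv_funpow_dist1[OF i]
    by (simp add: card_image inj_on_funpow_dist1[OF i])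
qed

lemma card_orbit_of_pos: "permutation p \<Longrightarrow> card (orbit_of p i) > 0"
  using card_orbit_of by simp

lemma funpow_eq_iff_mod_card_orbit_of:
  assumes p: "permutation p"
  shows "(p ^^ a) i = (p ^^ b) i \<longleftrightarrow> a mod card (orbit_of p i) = b mod card (orbit_of p i)"
proof -
  define d where "d = card (orbit_of p i)"
  have i: "i \<in> orbit p i" using permutation_self_in_orbit[OF p] .
  have d: "d = funpow_dist1 p i i" using card_orbit_of[OF p] d_def by simp
  have "(p ^^ d) i = i" using funpow_dist1_prop[OF i] d by simp
  then have mod: "(p ^^ c) i = (p ^^ (c mod d)) i" for c
    using funpow_mod_eq[where f=p and n=d and x=i] by metis
  have "inj_on (\<lambda>c. (p ^^ c) i) {0..<d}" using inj_on_funpow_dist1[OF i] d by simp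
  moreover have "d > 0" using d by simp
  ultimately show ?thesis unfolding d_def[symmetric] mod[of a] mod[of b]
    by (auto simp: inj_on_def)
qed

lemma funpow_fixes_iff_card_orbit_of_dvd:
  "permutation p \<Longrightarrow> (p ^^ k) i = i \<longleftrightarrow> card (orbit_of p i) dvd k"
  using funpow_eq_iff_mod_card_orbit_of[of p k i 0] by (simp add: mod_eq_0_iff_dvd)

lemma dvd_mult_iff_div_gcd_dvd:
  fixes d k m :: nat assumes "k > 0" "d > 0"
  shows "d dvd k * m \<longleftrightarrow> d div gcd d k dvd m"
proof -
  have "d div gcd d k dvd m \<longleftrightarrow> d dvd m * gcd d k"
    using assms by (simp add: div_dvd_iff_mult)
  also have "\<dots> \<longleftrightarrow> d dvd gcd (m * d) (m * k)" by (simp add: gcd_mult_distrib_nat)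
  also have "\<dots> \<longleftrightarrow> d dvd k * m" by (simp add: mult.commute)
  finally show ?thesis by simp
qed

lemma card_orbit_of_funpow:
  assumes p: "permutation p" and a: "a > 0"
  shows "card (orbit_of (p ^^ a) i) = card (orbit_of p i) div gcd (card (orbit_of p i)) a"
proof -
  define d where "d = card (orbit_of p i)"
  have "card (orbit_of (p ^^ a) i) dvd k \<longleftrightarrow> d div gcd d a dvd k" for k
  proof -
    have "card (orbit_of (p ^^ a) i) dvd k \<longleftrightarrow> (p ^^ (a * k)) i = i"
      using funpow_fixes_iff_card_orbit_of_dvd[OF permutation_funpow[OF p]] by (simp add: funpow_mult)
    also have "\<dots> \<longleftrightarrow> d div gcd d a dvd k"
      using funpow_fixes_iff_card_orbit_of_dvd[OF p] dvd_mult_iff_div_gcd_dvd[OF a card_orbit_of_pos[OF p]]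
      by (simp add: d_def)
    finally show ?thesis .
  qed
  then show ?thesis unfolding d_def[symmetric] by (metis dvd_antisym dvd_refl)
qed

section \<open>Order and cyclic subgroup of a permutation of {1..n}\<close>

definition perm_order :: "nat \<Rightarrow> (nat \<Rightarrow> nat) \<Rightarrow> nat" where
  "perm_order n p = type_order (perm_type n p)"

lemma perm_order_eq_Lcm: "perm_order n p = Lcm (card ` orbit_of p ` {1..n})"
proof -
  have "finite (orbit_of p ` {1..n})" by simp
  then show ?thesis unfolding perm_order_def type_order_def perm_type_def
    by (simp only: set_image_mset finite_set_mset_mset_set)
qed

lemma permutation_of_permutes_atLeastAtMost: "(p::nat\<Rightarrow>nat) permutes {1..n} \<Longrightarrow> permutation p"
  unfolding permutation_permutes by blast

lemma permutes_eq_iff: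
  assumes "f permutes S" "g permutes S"
  shows "f = g \<longleftrightarrow> (\<forall>i\<in>S. f i = g i)"
  using assms by (metis permutes_not_in ext)

lemma funpow_eq_id_iff:
  assumes p: "p permutes {1..n}" shows "p ^^ k = id \<longleftrightarrow> perm_order n p dvd k"
proof -
  have "p ^^ k = id \<longleftrightarrow> (\<forall>i\<in>{1..n}. card (orbit_of p i) dvd k)"
    using permutes_eq_iff[OF permutes_funpow[OF p] permutes_id]
      funpow_fixes_iff_card_orbit_of_dvd[OF permutation_of_permutes_atLeastAtMost[OF p]] by simp
  then show ?thesis unfolding perm_order_eq_Lcm Lcm_dvd_iff by blast
qed

lemma funpow_eq_iff_mod_perm_order:
  assumes p: "p permutes {1..n}"
  shows "p ^^ a = p ^^ b \<longleftrightarrow> a mod perm_order n p = b mod perm_order n p"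
proof -
  have pp: "permutation p" using permutation_of_permutes_atLeastAtMost[OF p] .
  have le: "p ^^ a = p ^^ b \<longleftrightarrow> a mod perm_order n p = b mod perm_order n p" if ba: "b \<le> a" for a b
  proof -
    have "p ^^ a = p ^^ b \<longleftrightarrow> (\<forall>i\<in>{1..n}. card (orbit_of p i) dvd a - b)"
      using permutes_eq_iff[OF permutes_funpow[OF p] permutes_funpow[OF p]]
        funpow_eq_iff_mod_card_orbit_of[OF pp] mod_eq_dvd_iff_nat[OF ba] by simp
    also have "\<dots> \<longleftrightarrow> perm_order n p dvd a - b"
      unfolding perm_order_eq_Lcm Lcm_dvd_iff by blast
    also have "\<dots> \<longleftrightarrow> a mod perm_order n p = b mod perm_order n p"
      using mod_eq_dvd_iff_nat[OF ba] by simp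
    finally show ?thesis .
  qed
  show ?thesis using le[of b a] le[of a b] by (cases "b \<le> a") auto
qed

lemma perm_order_pos:
  assumes p: "p permutes {1..n}" shows "perm_order n p > 0"
proof -
  have "0 \<notin> card ` orbit_of p ` {1..n}"
    using card_orbit_of_pos[OF permutation_of_permutes_atLeastAtMost[OF p]] by (metis image_iff less_irrefl)
  moreover have "finite (card ` orbit_of p ` {1..n})" by simp
  ultimately show ?thesis unfolding perm_order_eq_Lcm using Lcm_0_iff by (metis gr0I)
qed

lemma perm_order_eq_1_iff: "p permutes {1..n} \<Longrightarrow> perm_order n p = 1 \<longleftrightarrow> p = id"
  using funpow_eq_id_iff[of p n 1] by simp

lemma perm_order_funpow:
  assumes p: "p permutes {1..n}" and k: "k > 0"
  shows "perm_order n (p ^^ k) = perm_order n p div gcd (perm_order n p) k"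
proof -
  have "perm_order n (p ^^ k) dvd m \<longleftrightarrow> perm_order n p div gcd (perm_order n p) k dvd m" for m
    using funpow_eq_id_iff[OF permutes_funpow[OF p]] funpow_eq_id_iff[OF p]
      dvd_mult_iff_div_gcd_dvd[OF k perm_order_pos[OF p]] by (simp add: funpow_mult)
  then show ?thesis by (metis dvd_antisym dvd_refl)
qed

lemma cyc_eq_image_funpow:
  assumes p: "p permutes {1..n}" shows "cyc p = (\<lambda>k. p ^^ k) ` {1..perm_order n p}"
proof
  show "(\<lambda>k. p ^^ k) ` {1..perm_order n p} \<subseteq> cyc p" unfolding cyc_def by auto
  have "p ^^ k \<in> (\<lambda>k. p ^^ k) ` {1..perm_order n p}" for k
  proof (cases "k mod perm_order n p = 0")
    case True
    then have "p ^^ k = p ^^ perm_order n p" using funpow_eq_iff_mod_perm_order[OF p] by simp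
    then show ?thesis using perm_order_pos[OF p] by auto
  next
    case False
    then have "p ^^ k = p ^^ (k mod perm_order n p)" "k mod perm_order n p \<in> {1..perm_order n p}"
      using funpow_eq_iff_mod_perm_order[OF p] perm_order_pos[OF p] by (auto simp: less_imp_le)
    then show ?thesis by blast
  qed
  then show "cyc p \<subseteq> (\<lambda>k. p ^^ k) ` {1..perm_order n p}" unfolding cyc_def by auto
qed

lemma inj_on_funpow_perm_order:
  assumes p: "p permutes {1..n}" shows "inj_on (\<lambda>k. p ^^ k) {1..perm_order n p}"
proof (rule inj_onI)
  fix a b assume ab: "a \<in> {1..perm_order n p}" "b \<in> {1..perm_order n p}" "p ^^ a = p ^^ b"
  then have "a mod perm_order n p = b mod perm_order n p"
    using funpow_eq_iff_mod_perm_order[OF p] by simp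
  with ab(1,2) show "a = b" by (auto simp: mod_if split: if_splits)
qed

lemma card_cyc: "p permutes {1..n} \<Longrightarrow> card (cyc p) = perm_order n p"
  using cyc_eq_image_funpow inj_on_funpow_perm_order card_image by fastforce

lemma finite_cyc: "p permutes {1..n} \<Longrightarrow> finite (cyc p)"
  using cyc_eq_image_funpow by simp

lemma self_in_cyc: "p \<in> cyc p"
  unfolding cyc_def by (rule range_eqI[of _ _ 1]) simp

lemma cyc_funpow_subset: "cyc (p ^^ k) \<subseteq> cyc p"
  unfolding cyc_def by (auto simp: funpow_mult)

lemma cyc_funpow_eq_iff:
  assumes p: "p permutes {1..n}"
  shows "cyc (p ^^ k) = cyc p \<longleftrightarrow> perm_order n (p ^^ k) = perm_order n p"
  using card_cyc[OF p] card_cyc[OF permutes_funpow[OF p]] cyc_funpow_subset[where p=p and k=k] finite_cyc[OF p]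
  by (metis card_subset_eq)

lemma cyc_funpow_eq_iff_coprime:
  assumes p: "p permutes {1..n}" and k: "k > 0"
  shows "cyc (p ^^ k) = cyc p \<longleftrightarrow> coprime k (perm_order n p)"
proof -
  define d where "d = perm_order n p"
  have "d > 0" using perm_order_pos[OF p] d_def by simp
  have "d div gcd d k = d \<longleftrightarrow> gcd d k = 1"
  proof
    assume "d div gcd d k = d"
    then have "d * gcd d k = d * 1" by (metis dvd_mult_div_cancel gcd_dvd1 mult.commute mult_1_right)
    then show "gcd d k = 1" using \<open>d > 0\<close> by simp
  qed simp
  then show ?thesis unfolding cyc_funpow_eq_iff[OF p] perm_order_funpow[OF p k] d_def[symmetric]
    by (simp add: coprime_iff_gcd_eq_1 gcd.commute)
qed

section \<open>Permutation groups and the classes [x]\<close>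

lemma perm_subgroup_permutes: "perm_subgroup n G \<Longrightarrow> p \<in> G \<Longrightarrow> p permutes {1..n}"
  unfolding perm_subgroup_def Sym_def by auto

lemma perm_subgroup_funpow:
  assumes G: "perm_subgroup n G" and p: "p \<in> G" shows "p ^^ k \<in> G"
proof (induction k)
  case 0 then show ?case using G by (simp add: perm_subgroup_def id_def)
next
  case (Suc k)
  then have "p \<circ> p ^^ k \<in> G" using G p unfolding perm_subgroup_def by blast
  then show ?case by (metis funpow.simps(2))
qed

lemma finite_perm_subgroup: "perm_subgroup n G \<Longrightarrow> finite G"
  unfolding perm_subgroup_def Sym_def using finite_permutations[of "{1..n}"] finite_subset by auto

lemma cls_self: "x \<in> G \<Longrightarrow> x \<in> cls G x"
  unfolding cls_def by simp

lemma cls_subset: "cls G x \<subseteq> G"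
  unfolding cls_def by auto

lemma cls_eq: "y \<in> cls G x \<Longrightarrow> cls G y = cls G x"
  unfolding cls_def by auto

lemma cls_eq_image_totatives:
  assumes G: "perm_subgroup n G" and x: "x \<in> G"
  shows "cls G x = (\<lambda>k. x ^^ k) ` totatives (perm_order n x)"
proof -
  have xp: "x permutes {1..n}" using perm_subgroup_permutes[OF G x] .
  have "y \<in> cls G x \<longleftrightarrow> (\<exists>k\<in>{1..perm_order n x}. y = x ^^ k \<and> coprime k (perm_order n x))" for y
  proof
    assume y: "y \<in> cls G x"
    then have "y \<in> cyc x" using self_in_cyc[of y] unfolding cls_def by auto
    then obtain k where "k \<in> {1..perm_order n x}" "y = x ^^ k" using cyc_eq_image_funpow[OF xp] by auto
    with y show "\<exists>k\<in>{1..perm_order n x}. y = x ^^ k \<and> coprime k (perm_order n x)"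
      using cyc_funpow_eq_iff_coprime[OF xp] unfolding cls_def by auto
  next
    assume "\<exists>k\<in>{1..perm_order n x}. y = x ^^ k \<and> coprime k (perm_order n x)"
    then obtain k where "k \<ge> 1" "y = x ^^ k" "coprime k (perm_order n x)" by auto
    then show "y \<in> cls G x"
      using cyc_funpow_eq_iff_coprime[OF xp, of k] perm_subgroup_funpow[OF G x] unfolding cls_def by simp
  qed
  then have "cls G x = (\<lambda>k. x ^^ k) ` {k \<in> {1..perm_order n x}. coprime k (perm_order n x)}"
    by blast
  moreover have "{k \<in> {1..perm_order n x}. coprime k (perm_order n x)} = totatives (perm_order n x)"
    by (auto simp: in_totatives_iff)
  ultimately show ?thesis by simp
qed

lemma card_cls:
  assumes G: "perm_subgroup n G" and x: "x \<in> G"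
  shows "card (cls G x) = totient (perm_order n x)"
proof -
  have "totatives (perm_order n x) \<subseteq> {1..perm_order n x}" by (auto simp: in_totatives_iff)
  then have "inj_on (\<lambda>k. x ^^ k) (totatives (perm_order n x))"
    using inj_on_funpow_perm_order[OF perm_subgroup_permutes[OF G x]] inj_on_subset by blast
  then show ?thesis unfolding cls_eq_image_totatives[OF G x] totient_def by (simp add: card_image)
qed

lemma perm_type_eq_of_cyc_eq:
  assumes "cyc y = cyc x" shows "perm_type n y = perm_type n x"
proof -
  obtain k where "y = x ^^ k" using self_in_cyc[of y] assms unfolding cyc_def by auto
  moreover obtain j where "x = y ^^ j" using self_in_cyc[of x] assms unfolding cyc_def by auto
  ultimately have "orbit_of y i = orbit_of x i" for i
    using orbit_of_funpow_subset[where p=x and k=k and i=i]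
      orbit_of_funpow_subset[where p=y and k=j and i=i] by auto
  then show ?thesis unfolding perm_type_def by simp
qed

section \<open>Conjugation\<close>

lemma conj_perm_funpow:
  assumes y: "y permutes S" shows "(conj_perm y p) ^^ k = conj_perm y (p ^^ k)"
proof (induction k)
  case 0 then show ?case unfolding conj_perm_def using permutes_inv_o(2)[OF y] by simp
next
  case (Suc k)
  have "conj_perm y p ^^ Suc k = conj_perm y p \<circ> conj_perm y (p ^^ k)" using Suc by simp
  also have "\<dots> = inv y \<circ> p \<circ> (y \<circ> inv y) \<circ> p ^^ k \<circ> y"
    unfolding conj_perm_def by (simp add: o_assoc)
  also have "\<dots> = conj_perm y (p ^^ Suc k)"
    unfolding conj_perm_def using permutes_inv_o(1)[OF y] by (simp add: o_assoc)
  finally show ?case .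
qed

lemma conj_perm_inv_conj_perm:
  assumes y: "y permutes S" shows "conj_perm (inv y) (conj_perm y p) = p"
  unfolding conj_perm_def permutes_inv_inv[OF y]
  by (auto simp: fun_eq_iff permutes_inverses[OF y])

lemma inj_conj_perm: "y permutes S \<Longrightarrow> inj (conj_perm y)"
  by (metis conj_perm_inv_conj_perm injI)

lemma conj_perm_id: "y permutes S \<Longrightarrow> conj_perm y id = id"
  unfolding conj_perm_def using permutes_inv_o(2) by simp

lemma orbit_of_conj_perm:
  assumes y: "y permutes S" shows "orbit_of (conj_perm y p) i = inv y ` orbit_of p (y i)"
  unfolding orbit_of_def conj_perm_funpow[OF y] by (auto simp: conj_perm_def)

lemma perm_type_conj_perm:
  assumes y: "y permutes {1..n}" shows "perm_type n (conj_perm y p) = perm_type n p"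
proof -
  define A where "A = orbit_of p ` {1..n}"
  have "orbit_of (conj_perm y p) ` {1..n} = (\<lambda>B. inv y ` B) ` (orbit_of p ` (y ` {1..n}))"
    using orbit_of_conj_perm[OF y] by (auto simp: image_image)
  then have orbits: "orbit_of (conj_perm y p) ` {1..n} = (\<lambda>B. inv y ` B) ` A"
    unfolding A_def permutes_image[OF y] .
  have inj: "inj (inv y)" using permutes_inj[OF permutes_inv[OF y]] .
  then have "inj_on (\<lambda>B. inv y ` B) A" by (simp add: inj_on_def inj_image_eq_iff)
  then have "perm_type n (conj_perm y p) = image_mset (\<lambda>B. card (inv y ` B)) (mset_set A)"
    unfolding perm_type_def orbits by (simp add: image_mset_mset_set[symmetric] image_mset.compositionality o_def)
  also have "\<dots> = image_mset card (mset_set A)"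
    using inj by (intro image_mset_cong) (simp add: card_image inj_on_subset)
  finally show ?thesis unfolding perm_type_def A_def .
qed

lemma cyc_conj_perm: "y permutes S \<Longrightarrow> cyc (conj_perm y p) = conj_perm y ` cyc p"
  unfolding cyc_def by (auto simp: conj_perm_funpow)

lemma normalizer_permutes: "y \<in> normalizer n G \<Longrightarrow> y permutes {1..n}"
  unfolding normalizer_def Sym_def by auto

lemma normalizer_conj_image: "y \<in> normalizer n G \<Longrightarrow> conj_perm y ` G = G"
  unfolding normalizer_def by auto

lemma normalizer_inv:
  assumes y: "y \<in> normalizer n G" shows "inv y \<in> normalizer n G"
proof -
  have yp: "y permutes {1..n}" using normalizer_permutes[OF y] .
  have "conj_perm (inv y) ` G = conj_perm (inv y) ` conj_perm y ` G"
    using normalizer_conj_image[OF y] by simp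
  also have "\<dots> = G" by (simp add: image_image conj_perm_inv_conj_perm[OF yp])
  finally show ?thesis unfolding normalizer_def Sym_def using permutes_inv[OF yp] by simp
qed

lemma cls_conj_perm:
  assumes y: "y \<in> normalizer n G" and x: "x \<in> G"
  shows "conj_perm y ` cls G x = cls G (conj_perm y x)"
proof -
  have yp: "y permutes {1..n}" using normalizer_permutes[OF y] .
  have "w \<in> conj_perm y ` cls G x \<longleftrightarrow> w \<in> cls G (conj_perm y x)" for w
  proof -
    have "w \<in> cls G (conj_perm y x) \<longleftrightarrow> (\<exists>z\<in>G. w = conj_perm y z \<and> cyc w = cyc (conj_perm y x))"
      using normalizer_conj_image[OF y] unfolding cls_def by auto
    also have "\<dots> \<longleftrightarrow> (\<exists>z\<in>G. w = conj_perm y z \<and> cyc z = cyc x)"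
      using inj_conj_perm[OF yp] by (auto simp: cyc_conj_perm[OF yp] inj_image_eq_iff)
    finally show ?thesis unfolding cls_def by auto
  qed
  then show ?thesis by blast
qed

section \<open>The type of a power\<close>

lemma image_mset_mset_set_UN_disjoint:
  assumes "finite I" "\<forall>i\<in>I. finite (A i)" "\<forall>i\<in>I. \<forall>j\<in>I. i \<noteq> j \<longrightarrow> A i \<inter> A j = {}"
  shows "image_mset h (mset_set (\<Union>i\<in>I. A i)) = (\<Sum>i\<in>I. image_mset h (mset_set (A i)))"
  using assms
proof (induction I rule: finite_induct)
  case (insert i I)
  have "A i \<inter> A j = {}" if "j \<in> I" for j
    using that insert.hyps(2) insert.prems(2) by (metis insertCI)
  then have "A i \<inter> (\<Union>j\<in>I. A j) = {}" by blast
  then have "mset_set (\<Union>j\<in>insert i I. A j) = mset_set (A i) + mset_set (\<Union>j\<in>I. A j)"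
    using insert by (simp add: mset_set_Union)
  then show ?case using insert by simp
qed simp

lemma orbit_of_funpow_subset_orbit:
  "permutation p \<Longrightarrow> j \<in> orbit_of p i \<Longrightarrow> orbit_of (p ^^ a) j \<subseteq> orbit_of p i"
  using orbit_of_funpow_subset orbit_of_eq by metis

lemma orbits_of_funpow_in_orbit:
  fixes p :: "nat \<Rightarrow> nat" and i :: nat
  assumes p: "permutation p" and a: "a > 0"
  defines "m \<equiv> card (orbit_of p i)"
  shows "image_mset card (mset_set (orbit_of (p ^^ a) ` orbit_of p i))
           = replicate_mset (gcd a m) (m div gcd a m)"
proof -
  define B where "B = orbit_of p i"
  define g where "g = gcd a m"
  have pa: "permutation (p ^^ a)" using permutation_funpow[OF p] .
  have finB: "finite B" using finite_orbit_of[OF p] B_def by simp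
  have cards: "card C = m div g" if C: "C \<in> orbit_of (p ^^ a) ` B" for C
  proof -
    obtain j where j: "j \<in> B" "C = orbit_of (p ^^ a) j" using C by blast
    then have "orbit_of p j = B" using orbit_of_eq[OF p] B_def by simp
    then show ?thesis using card_orbit_of_funpow[OF p a, of j] j m_def g_def B_def by (simp add: gcd.commute)
  qed
  have union: "\<Union> (orbit_of (p ^^ a) ` B) = B"
    using orbit_of_self orbit_of_funpow_subset_orbit[OF p] B_def by blast
  have "(m div g) * card (orbit_of (p ^^ a) ` B) = card (\<Union> (orbit_of (p ^^ a) ` B))"
  proof (rule card_partition)
    show "c1 \<inter> c2 = {}" if "c1 \<in> orbit_of (p ^^ a) ` B" "c2 \<in> orbit_of (p ^^ a) ` B" "c1 \<noteq> c2"
      for c1 c2 using that orbit_of_eq[OF pa] by blast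
  qed (use finB union cards in auto)
  then have "(m div g) * card (orbit_of (p ^^ a) ` B) = (m div g) * g"
    using union m_def B_def g_def by simp
  moreover have "m div g > 0" using card_orbit_of_pos[OF p] m_def g_def
    by (simp add: div_greater_zero_iff gcd_le2_nat)
  ultimately have "card (orbit_of (p ^^ a) ` B) = g" by simp
  moreover have "image_mset card (mset_set (orbit_of (p ^^ a) ` B))
      = image_mset (\<lambda>_. m div g) (mset_set (orbit_of (p ^^ a) ` B))"
    using cards by (intro image_mset_cong) (simp add: finB)
  ultimately show ?thesis unfolding B_def g_def by (simp add: image_mset_const_eq)
qed

lemma perm_type_funpow:
  assumes p: "p permutes {1..n}" and a: "a > 0"
  shows "perm_type n (p ^^ a) = type_pow (perm_type n p) a"
proof -
  define Op where "Op = orbit_of p ` {1..n}"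
  have pp: "permutation p" using permutation_of_permutes_atLeastAtMost[OF p] .
  have "(\<Union>B\<in>Op. B) = {1..n}"
    using orbit_of_self orbit_of_subset_permutes[OF p] unfolding Op_def by blast
  then have orbits: "orbit_of (p ^^ a) ` {1..n} = (\<Union>B\<in>Op. orbit_of (p ^^ a) ` B)" by blast
  have disjoint: "orbit_of (p ^^ a) ` B1 \<inter> orbit_of (p ^^ a) ` B2 = {}"
    if "B1 \<in> Op" "B2 \<in> Op" "B1 \<noteq> B2" for B1 B2
  proof (rule ccontr)
    assume "orbit_of (p ^^ a) ` B1 \<inter> orbit_of (p ^^ a) ` B2 \<noteq> {}"
    then obtain i1 i2 where i: "i1 \<in> B1" "i2 \<in> B2" "orbit_of (p ^^ a) i1 = orbit_of (p ^^ a) i2"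
      by blast
    then have "i1 \<in> B2" using orbit_of_self[of i1] orbit_of_funpow_subset_orbit[OF pp] that(2)
      orbit_of_eq[OF pp] unfolding Op_def by blast
    then show False using i(1) that orbit_of_eq[OF pp] unfolding Op_def by blast
  qed
  have "perm_type n (p ^^ a) = (\<Sum>B\<in>Op. image_mset card (mset_set (orbit_of (p ^^ a) ` B)))"
    unfolding perm_type_def orbits
    using disjoint finite_orbit_of[OF pp] unfolding Op_def
    by (intro image_mset_mset_set_UN_disjoint) auto
  also have "\<dots> = (\<Sum>B\<in>Op. replicate_mset (gcd a (card B)) (card B div gcd a (card B)))"
    using orbits_of_funpow_in_orbit[OF pp a] unfolding Op_def by (intro sum.cong) auto
  also have "\<dots> = type_pow (perm_type n p) a"
    unfolding type_pow_def perm_type_def Op_def sum_unfold_sum_mset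
    by (simp add: image_mset.compositionality o_def)
  finally show ?thesis .
qed

section \<open>Permutations of the same type are conjugate\<close>

lemma image_mset_mset_set_eq_imp_bij:
  assumes "finite B" "finite A" "image_mset g (mset_set A) = image_mset h (mset_set B)"
  shows "\<exists>f. bij_betw f B A \<and> (\<forall>b\<in>B. g (f b) = h b)"
  using assms
proof (induction B arbitrary: A rule: finite_induct)
  case empty
  then have "A = {}" by (metis image_mset_is_empty_iff mset_set.empty mset_set_empty_iff)
  then show ?case by (auto simp: bij_betw_def)
next
  case (insert b B A)
  have "h b \<in># image_mset g (mset_set A)" using insert by simp
  then obtain a where a: "a \<in> A" "g a = h b" by (auto simp: insert(4))
  have "add_mset (g a) (image_mset g (mset_set (A - {a})))
      = add_mset (h b) (image_mset h (mset_set B))"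
    using insert(1,2,4,5) a(1)
    by (metis image_mset_add_mset mset_set.insert finite_Diff Diff_iff insertI1 mset_set.insert_remove
        insert_Diff)
  then have "image_mset g (mset_set (A - {a})) = image_mset h (mset_set B)" using a by simp
  then obtain f where f: "bij_betw f B (A - {a})" "\<forall>b\<in>B. g (f b) = h b"
    using insert.IH[of "A - {a}"] insert(4) by auto
  have "bij_betw (f(b := a)) B (A - {a})" using f(1) insert(2) by (metis bij_betw_cong fun_upd_other)
  moreover have "bij_betw (f(b := a)) {b} {a}" by (simp add: bij_betw_def)
  ultimately have "bij_betw (f(b := a)) (B \<union> {b}) ((A - {a}) \<union> {a})"
    by (intro bij_betw_combine) auto
  moreover have "B \<union> {b} = insert b B" "(A - {a}) \<union> {a} = A" using a by auto
  moreover have "\<forall>c\<in>insert b B. g ((f(b := a)) c) = h c" using f(2) a insert(2) by auto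
  ultimately show ?case by auto
qed

definition orbit_transport :: "(nat \<Rightarrow> nat) \<Rightarrow> nat \<Rightarrow> (nat \<Rightarrow> nat) \<Rightarrow> nat \<Rightarrow> nat \<Rightarrow> nat" where
  "orbit_transport q i p i' j = (p ^^ funpow_dist q i j) i'"

lemma funpow_eq_iff_of_card_orbit_of_eq:
  assumes "permutation p" "permutation q" "card (orbit_of q i) = card (orbit_of p i')"
  shows "(q ^^ a) i = (q ^^ b) i \<longleftrightarrow> (p ^^ a) i' = (p ^^ b) i'"
  using assms by (simp add: funpow_eq_iff_mod_card_orbit_of)

lemma funpow_orbit_transport:
  assumes "permutation q" "j \<in> orbit_of q i" shows "(q ^^ funpow_dist q i j) i = j"
  using assms by (simp add: orbit_of_eq_orbit funpow_dist_prop)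

lemma orbit_transport_step:
  assumes p: "permutation p" and q: "permutation q"
    and card: "card (orbit_of q i) = card (orbit_of p i')" and j: "j \<in> orbit_of q i"
  shows "orbit_transport q i p i' (q j) = p (orbit_transport q i p i' j)"
proof -
  have "q j \<in> orbit_of q i" using orbit_of_step[OF q, of j] orbit_of_eq[OF q j] orbit_of_self by blast
  then have "(q ^^ funpow_dist q i (q j)) i = (q ^^ Suc (funpow_dist q i j)) i"
    using funpow_orbit_transport[OF q] j by simp
  then have "(p ^^ funpow_dist q i (q j)) i' = (p ^^ Suc (funpow_dist q i j)) i'"
    using funpow_eq_iff_of_card_orbit_of_eq[OF p q card] by blast
  then show ?thesis unfolding orbit_transport_def by simp
qed

lemma orbit_transport_in_orbit_of: "orbit_transport q i p i' j \<in> orbit_of p i'"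
  unfolding orbit_transport_def by (rule funpow_in_orbit_of)

lemma orbit_transport_inj:
  assumes p: "permutation p" and q: "permutation q"
    and card: "card (orbit_of q i) = card (orbit_of p i')"
    and j: "j1 \<in> orbit_of q i" "j2 \<in> orbit_of q i"
    and eq: "orbit_transport q i p i' j1 = orbit_transport q i p i' j2"
  shows "j1 = j2"
  using eq funpow_eq_iff_of_card_orbit_of_eq[OF p q card] funpow_orbit_transport[OF q] j
  unfolding orbit_transport_def by metis

definition orbit_rep :: "nat set \<Rightarrow> nat" where
  "orbit_rep B = (SOME r. r \<in> B)"

lemma orbit_rep_in_orbit_of: "orbit_rep (orbit_of r j) \<in> orbit_of r j"
  unfolding orbit_rep_def using orbit_of_self by (metis some_in_eq empty_iff)

lemma orbit_of_orbit_rep: "permutation r \<Longrightarrow> orbit_of r (orbit_rep (orbit_of r j)) = orbit_of r j"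
  using orbit_of_eq orbit_rep_in_orbit_of by blast

text \<open>Given a length-preserving matching f of the cycles of q with those of p, map each cycle of q
  onto its partner by transport between the chosen representatives.\<close>
definition orbit_matching_map :: "(nat \<Rightarrow> nat) \<Rightarrow> (nat \<Rightarrow> nat) \<Rightarrow> (nat set \<Rightarrow> nat set) \<Rightarrow> nat \<Rightarrow> nat"
  where "orbit_matching_map q p f j =
    orbit_transport q (orbit_rep (orbit_of q j)) p (orbit_rep (f (orbit_of q j))) j"

context
  fixes p q :: "nat \<Rightarrow> nat" and S :: "nat set" and f :: "nat set \<Rightarrow> nat set"
  assumes p: "p permutes S" and q: "q permutes S" and S: "finite S"
    and f: "bij_betw f (orbit_of q ` S) (orbit_of p ` S)"
    and card_f: "\<forall>B \<in> orbit_of q ` S. card (f B) = card B"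
begin

private lemma permutations: "permutation p" "permutation q"
  using p q S permutation_permutes by blast+

private lemma matched_orbit:
  assumes j: "j \<in> S"
  shows "orbit_of p (orbit_rep (f (orbit_of q j))) = f (orbit_of q j)"
    and "orbit_rep (f (orbit_of q j)) \<in> S"
proof -
  have "f (orbit_of q j) \<in> orbit_of p ` S" using bij_betwE[OF f] j by blast
  then obtain i where i: "i \<in> S" "f (orbit_of q j) = orbit_of p i" by blast
  then show "orbit_of p (orbit_rep (f (orbit_of q j))) = f (orbit_of q j)"
    using orbit_of_orbit_rep[OF permutations(1)] by simp
  show "orbit_rep (f (orbit_of q j)) \<in> S"
    using orbit_rep_in_orbit_of orbit_of_subset_permutes[OF p i(1)] i(2) by auto
qed

private lemma card_matched_orbit:
  "j \<in> S \<Longrightarrow> card (orbit_of q (orbit_rep (orbit_of q j))) = card (orbit_of p (orbit_rep (f (orbit_of q j))))"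
  using card_f matched_orbit(1) orbit_of_orbit_rep[OF permutations(2)] by simp

private lemma in_orbit_of_orbit_rep: "j \<in> orbit_of q (orbit_rep (orbit_of q j))"
  using orbit_of_orbit_rep[OF permutations(2)] orbit_of_self by simp

lemma orbit_matching_map_step:
  "j \<in> S \<Longrightarrow> orbit_matching_map q p f (q j) = p (orbit_matching_map q p f j)"
  using orbit_transport_step[OF permutations card_matched_orbit in_orbit_of_orbit_rep]
  unfolding orbit_matching_map_def orbit_of_step[OF permutations(2)] by simp

lemma orbit_matching_map_in:
  assumes "j \<in> S" shows "orbit_matching_map q p f j \<in> S"
  using orbit_transport_in_orbit_of orbit_of_subset_permutes[OF p matched_orbit(2)[OF assms]]
  unfolding orbit_matching_map_def by blast

lemma inj_on_orbit_matching_map: "inj_on (orbit_matching_map q p f) S"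
proof (rule inj_onI)
  fix j1 j2 assume j: "j1 \<in> S" "j2 \<in> S" "orbit_matching_map q p f j1 = orbit_matching_map q p f j2"
  have image_orbit: "orbit_of p (orbit_matching_map q p f j) = f (orbit_of q j)" if "j \<in> S" for j
    using orbit_of_eq[OF permutations(1) orbit_transport_in_orbit_of] matched_orbit(1)[OF that]
    unfolding orbit_matching_map_def by simp
  have "orbit_of q j1 = orbit_of q j2"
    using image_orbit[OF j(1)] image_orbit[OF j(2)] j bij_betw_imp_inj_on[OF f]
    by (simp add: inj_on_eq_iff)
  then show "j1 = j2"
    using orbit_transport_inj[OF permutations card_matched_orbit[OF j(1)] in_orbit_of_orbit_rep] j
      in_orbit_of_orbit_rep[of j2] unfolding orbit_matching_map_def by metis
qed

lemma intertwining_permutation_exists: "\<exists>x. x permutes S \<and> x \<circ> q = p \<circ> x"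
proof -
  define x where "x j = (if j \<in> S then orbit_matching_map q p f j else j)" for j
  have "x ` S = S"
    using endo_inj_surj[OF S] orbit_matching_map_in inj_on_orbit_matching_map
    unfolding x_def by (simp add: image_subset_iff cong: inj_on_cong image_cong)
  then have "x permutes S"
    using inj_on_orbit_matching_map by (intro bij_imp_permutes) (auto simp: bij_betw_def x_def cong: inj_on_cong)
  moreover have "x (q j) = p (x j)" for j
    using orbit_matching_map_step permutes_not_in[OF p] permutes_not_in[OF q] permutes_in_image[OF q]
    unfolding x_def by (cases "j \<in> S") auto
  ultimately show ?thesis by (auto simp: fun_eq_iff)
qed

end

lemma conj_perm_eq_of_perm_type_eq:
  assumes p: "p permutes {1..n}" and q: "q permutes {1..n}" and T: "perm_type n p = perm_type n q"
  shows "\<exists>x\<in>Sym n. q = conj_perm x p"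
proof -
  have "image_mset card (mset_set (orbit_of p ` {1..n})) = image_mset card (mset_set (orbit_of q ` {1..n}))"
    using T unfolding perm_type_def .
  then obtain f where "bij_betw f (orbit_of q ` {1..n}) (orbit_of p ` {1..n})"
    "\<forall>B\<in>orbit_of q ` {1..n}. card (f B) = card B"
    using image_mset_mset_set_eq_imp_bij[of "orbit_of q ` {1..n}" "orbit_of p ` {1..n}" card card]
    by auto
  then obtain x where x: "x permutes {1..n}" "x \<circ> q = p \<circ> x"
    using intertwining_permutation_exists[OF p q] by auto
  then have "conj_perm x p = inv x \<circ> (x \<circ> q)" unfolding conj_perm_def by (simp add: comp_assoc)
  also have "\<dots> = q" using permutes_inv_o(2)[OF x(1)] by (simp add: comp_assoc[symmetric])
  finally have "conj_perm x p = q" .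
  then show ?thesis using x(1) unfolding Sym_def by auto
qed

section \<open>The reduced power graph\<close>

definition rpg_component :: "(nat \<Rightarrow> nat) set \<Rightarrow> (nat \<Rightarrow> nat) set \<Rightarrow> (nat \<Rightarrow> nat) set set" where
  "rpg_component G X = {Y \<in> rpg_vertices G. (rpg_adj G)\<^sup>*\<^sup>* X Y}"

lemma rpg_components_eq_image: "rpg_components G = rpg_component G ` rpg_vertices G"
  unfolding rpg_components_def rpg_component_def by auto

lemma rpg_vertex_eq_cls:
  assumes X: "X \<in> rpg_vertices G" and p: "p \<in> X"
  shows "X = cls G p" "p \<in> G" "p \<noteq> id"
proof -
  obtain x where x: "X = cls G x" "x \<in> G" "x \<noteq> id" using X unfolding rpg_vertices_def by auto
  show "X = cls G p" using cls_eq p x by metis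
  show "p \<in> G" using p x cls_subset by blast
  have "cyc p = cyc x" using p x unfolding cls_def by auto
  moreover have "cyc (id::nat\<Rightarrow>nat) = {id}" unfolding cyc_def by auto
  ultimately show "p \<noteq> id" using x self_in_cyc[of x] by auto
qed

lemma rpg_vertex_subset: "X \<in> rpg_vertices G \<Longrightarrow> X \<subseteq> G"
  using rpg_vertex_eq_cls(2) by blast

lemma perm_type_eq_in_rpg_vertex:
  assumes X: "X \<in> rpg_vertices G" and "p \<in> X" "z \<in> X" shows "perm_type n z = perm_type n p"
proof -
  have "cyc z = cyc p" using rpg_vertex_eq_cls(1)[OF X \<open>p \<in> X\<close>] \<open>z \<in> X\<close> unfolding cls_def by blast
  then show ?thesis by (rule perm_type_eq_of_cyc_eq)
qed

lemma finite_rpg_vertices: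
  assumes "perm_subgroup n G" shows "finite (rpg_vertices G)"
proof -
  have "rpg_vertices G \<subseteq> Pow G" using rpg_vertex_subset by blast
  then show ?thesis using finite_perm_subgroup[OF assms] by (simp add: finite_subset)
qed

lemma finite_rpg_components: "perm_subgroup n G \<Longrightarrow> finite (rpg_components G)"
  using finite_rpg_vertices rpg_components_eq_image by simp

lemma rpg_component_subset: "rpg_component G X \<subseteq> rpg_vertices G"
  unfolding rpg_component_def by auto

lemma rpg_component_self: "X \<in> rpg_vertices G \<Longrightarrow> X \<in> rpg_component G X"
  unfolding rpg_component_def by simp

lemma rpg_component_eq:
  assumes "Y \<in> rpg_component G X" shows "rpg_component G Y = rpg_component G X"
proof -
  have "symp (rpg_adj G)" unfolding rpg_adj_def symp_def by blast
  then have "(rpg_adj G)\<^sup>*\<^sup>* Y X"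
    using assms symp_rtranclp unfolding rpg_component_def by (blast dest: sympD)
  then show ?thesis using assms unfolding rpg_component_def by (auto intro: rtranclp_trans)
qed

lemma rpg_components_disjoint:
  assumes "C1 \<in> rpg_components G" "C2 \<in> rpg_components G" "C1 \<noteq> C2" shows "C1 \<inter> C2 = {}"
  using assms rpg_component_eq unfolding rpg_components_eq_image by (metis disjoint_iff imageE)

lemma rpg_vertex_conj_perm:
  assumes y: "y \<in> normalizer n G" and X: "X \<in> rpg_vertices G"
  shows "conj_perm y ` X \<in> rpg_vertices G"
proof -
  have yp: "y permutes {1..n}" using normalizer_permutes[OF y] .
  obtain x where x: "X = cls G x" "x \<in> G" "x \<noteq> id" using X unfolding rpg_vertices_def by auto
  have "conj_perm y x \<in> G" using normalizer_conj_image[OF y] x by blast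
  moreover have "conj_perm y x \<noteq> id"
    using x inj_conj_perm[OF yp] conj_perm_id[OF yp] by (metis injD)
  ultimately show ?thesis using cls_conj_perm[OF y x(2)] x(1) unfolding rpg_vertices_def by auto
qed

lemma rpg_adj_conj_perm:
  assumes y: "y \<in> normalizer n G" and a: "rpg_adj G X Y"
  shows "rpg_adj G (conj_perm y ` X) (conj_perm y ` Y)"
proof -
  have yp: "y permutes {1..n}" using normalizer_permutes[OF y] .
  from a obtain x z k where xz: "x \<in> X" "z \<in> Y" "k > 0" "z = x ^^ k \<or> x = z ^^ k"
    unfolding rpg_adj_def by auto
  have "conj_perm y z = conj_perm y x ^^ k \<or> conj_perm y x = conj_perm y z ^^ k"
    using xz(4) conj_perm_funpow[OF yp] by auto
  moreover have "conj_perm y ` X \<noteq> conj_perm y ` Y"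
    using a inj_conj_perm[OF yp] unfolding rpg_adj_def by (simp add: inj_image_eq_iff)
  ultimately show ?thesis
    using a rpg_vertex_conj_perm[OF y] xz unfolding rpg_adj_def by blast
qed

lemma rpg_component_conj_perm:
  assumes y: "y \<in> normalizer n G"
  shows "(\<lambda>Z. conj_perm y ` Z) ` rpg_component G X \<subseteq> rpg_component G (conj_perm y ` X)"
proof -
  have "(rpg_adj G)\<^sup>*\<^sup>* (conj_perm y ` X) (conj_perm y ` Y)" if "(rpg_adj G)\<^sup>*\<^sup>* X Y" for Y
    using that by (induction rule: rtranclp_induct)
      (auto intro: rtranclp.rtrancl_into_rtrancl rpg_adj_conj_perm[OF y])
  then show ?thesis unfolding rpg_component_def using rpg_vertex_conj_perm[OF y] by auto
qed

lemma rpg_component_conj_perm_eq: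
  assumes y: "y \<in> normalizer n G"
  shows "(\<lambda>Z. conj_perm y ` Z) ` rpg_component G X = rpg_component G (conj_perm y ` X)"
proof
  have yp: "y permutes {1..n}" using normalizer_permutes[OF y] .
  have undo: "conj_perm (inv y) ` conj_perm y ` Z = Z" for Z
    by (simp add: image_image conj_perm_inv_conj_perm[OF yp])
  have redo: "conj_perm y ` conj_perm (inv y) ` Z = Z" for Z
    using conj_perm_inv_conj_perm[OF permutes_inv[OF yp]] permutes_inv_inv[OF yp]
    by (simp add: image_image)
  show "rpg_component G (conj_perm y ` X) \<subseteq> (\<lambda>Z. conj_perm y ` Z) ` rpg_component G X"
  proof
    fix Z assume "Z \<in> rpg_component G (conj_perm y ` X)"
    then have "conj_perm (inv y) ` Z \<in> rpg_component G X"
      using rpg_component_conj_perm[OF normalizer_inv[OF y], of "conj_perm y ` X"] undo by auto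
    then show "Z \<in> (\<lambda>Z. conj_perm y ` Z) ` rpg_component G X" using redo[of Z] by (metis image_eqI)
  qed
qed (rule rpg_component_conj_perm[OF y])

lemma kC_conj_perm:
  assumes y: "y \<in> normalizer n G"
  shows "kC n (rpg_component G (conj_perm y ` X)) T = kC n (rpg_component G X) T"
proof -
  have yp: "y permutes {1..n}" using normalizer_permutes[OF y] .
  have "inj_on (\<lambda>Z. conj_perm y ` Z) A" for A
    using inj_conj_perm[OF yp] by (simp add: inj_on_def inj_image_eq_iff)
  moreover have "vertex_has_type n T (conj_perm y ` Z) \<longleftrightarrow> vertex_has_type n T Z" for Z
    using perm_type_conj_perm[OF yp] unfolding vertex_has_type_def by auto
  then have "{Z \<in> rpg_component G (conj_perm y ` X). vertex_has_type n T Z}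
      = (\<lambda>Z. conj_perm y ` Z) ` {Z \<in> rpg_component G X. vertex_has_type n T Z}"
    unfolding rpg_component_conj_perm_eq[OF y, symmetric] by auto
  ultimately show ?thesis unfolding kC_def by (simp add: card_image)
qed

section \<open>Counting components\<close>

lemma mu_eq_card_typed_vertices:
  assumes G: "perm_subgroup n G" and T: "T \<in> types0 n G"
  shows "mu n G T = card {X \<in> rpg_vertices G. vertex_has_type n T X} * totient (type_order T)"
proof -
  let ?VT = "{X \<in> rpg_vertices G. vertex_has_type n T X}"
  have "type_order T \<noteq> 1"
    using T perm_order_eq_1_iff[OF perm_subgroup_permutes[OF G]] unfolding types0_def perm_order_def
    by auto
  then have "p \<noteq> id" if "p \<in> G" "perm_type n p = T" for p
    using that perm_order_eq_1_iff[OF perm_subgroup_permutes[OF G]] unfolding perm_order_def by auto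
  then have "{p \<in> G. perm_type n p = T} \<subseteq> \<Union>?VT"
    using cls_self unfolding rpg_vertices_def vertex_has_type_def by blast
  moreover have "\<Union>?VT \<subseteq> {p \<in> G. perm_type n p = T}"
    using rpg_vertex_subset perm_type_eq_in_rpg_vertex unfolding vertex_has_type_def by blast
  moreover have "card (\<Union>?VT) = (\<Sum>X\<in>?VT. card X)"
  proof (rule card_Union_disjoint)
    show "pairwise disjnt ?VT" using rpg_vertex_eq_cls(1) unfolding pairwise_def disjnt_def by blast
  qed (use finite_perm_subgroup[OF G] rpg_vertex_subset finite_subset in blast)
  moreover have "card X = totient (type_order T)" if X: "X \<in> ?VT" for X
  proof -
    obtain p where p: "X \<in> rpg_vertices G" "p \<in> X" "perm_type n p = T"
      using X unfolding vertex_has_type_def by auto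
    show ?thesis using card_cls[OF G rpg_vertex_eq_cls(2)[OF p(1,2)]] rpg_vertex_eq_cls(1)[OF p(1,2)] p(3)
      unfolding perm_order_def by simp
  qed
  ultimately show ?thesis unfolding mu_def by (simp add: subset_antisym)
qed

lemma card_typed_vertices_eq_sum_kC:
  assumes G: "perm_subgroup n G"
  shows "card {X \<in> rpg_vertices G. vertex_has_type n T X}
       = (\<Sum>C \<in> {C'\<in>rpg_components G. \<exists>X\<in>C'. vertex_has_type n T X}. kC n C T)"
proof -
  let ?CT = "{C'\<in>rpg_components G. \<exists>X\<in>C'. vertex_has_type n T X}"
  have "{X \<in> rpg_vertices G. vertex_has_type n T X} = (\<Union>C\<in>?CT. {X \<in> C. vertex_has_type n T X})"
    using rpg_component_self rpg_component_subset unfolding rpg_components_eq_image by fastforce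
  moreover have "card (\<Union>C\<in>?CT. {X \<in> C. vertex_has_type n T X})
      = (\<Sum>C\<in>?CT. card {X \<in> C. vertex_has_type n T X})"
  proof (rule card_UN_disjoint)
    show "finite ?CT" using finite_rpg_components[OF G] by simp
    show "\<forall>C\<in>?CT. finite {X \<in> C. vertex_has_type n T X}"
      using finite_rpg_vertices[OF G] rpg_component_subset unfolding rpg_components_eq_image
      by (auto intro: finite_subset)
  qed (use rpg_components_disjoint in blast)
  ultimately show ?thesis unfolding kC_def by simp
qed

text \<open>Fusion control makes the normalizer transitive on the vertices of type T, and conjugation
  by the normalizer is a graph automorphism.\<close>
lemma kC_eq_of_fusion_controlled:
  assumes G: "perm_subgroup n G" and F: "fusion_controlled n G"
    and C: "C \<in> rpg_components G" "\<exists>X\<in>C. vertex_has_type n T X"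
    and C': "C' \<in> rpg_components G" "\<exists>X\<in>C'. vertex_has_type n T X"
  shows "kC n C' T = kC n C T"
proof -
  obtain X p where X: "X \<in> C" "p \<in> X" "perm_type n p = T"
    using C unfolding vertex_has_type_def by auto
  obtain X' p' where X': "X' \<in> C'" "p' \<in> X'" "perm_type n p' = T"
    using C' unfolding vertex_has_type_def by auto
  have V: "X \<in> rpg_vertices G" "X' \<in> rpg_vertices G"
    using X X' C C' rpg_component_subset unfolding rpg_components_eq_image by auto
  have comps: "C = rpg_component G X" "C' = rpg_component G X'"
    using C C' X X' rpg_component_eq unfolding rpg_components_eq_image by auto
  have pG: "p \<in> G" "p' \<in> G" using rpg_vertex_eq_cls(2) X X' V by auto
  obtain x where "x \<in> Sym n" "p' = conj_perm x p"
    using conj_perm_eq_of_perm_type_eq[OF perm_subgroup_permutes[OF G pG(1)]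
        perm_subgroup_permutes[OF G pG(2)]] X X' by auto
  then obtain y where y: "y \<in> normalizer n G" "p' = conj_perm y p"
    using F pG unfolding fusion_controlled_def by metis
  have "conj_perm y ` X = X'"
    using cls_conj_perm[OF y(1) pG(1)] rpg_vertex_eq_cls(1) X(2) X'(2) V y(2) by simp
  then show ?thesis using kC_conj_perm[OF y(1), of X T] comps by simp
qed

lemma rpg_adj_perm_type_pow:
  assumes G: "perm_subgroup n G" and adj: "rpg_adj G X Y"
  shows "\<exists>x\<in>X. \<exists>z\<in>Y. \<exists>a. perm_type n x \<noteq> perm_type n z \<and>
    (perm_type n z = type_pow (perm_type n x) a \<or> perm_type n x = type_pow (perm_type n z) a)"
proof -
  from adj obtain x z k where xz: "x \<in> X" "z \<in> Y" "k > 0" "z = x ^^ k \<or> x = z ^^ k"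
    unfolding rpg_adj_def by auto
  have V: "X \<in> rpg_vertices G" "Y \<in> rpg_vertices G" "X \<noteq> Y" using adj unfolding rpg_adj_def by auto
  have xp: "x permutes {1..n}" and zp: "z permutes {1..n}"
    using perm_subgroup_permutes[OF G] rpg_vertex_eq_cls(2) xz V by auto
  have "perm_type n x \<noteq> perm_type n z"
  proof
    assume "perm_type n x = perm_type n z"
    then have "perm_order n z = perm_order n x" unfolding perm_order_def by simp
    then have "cyc z = cyc x" using xz(4) cyc_funpow_eq_iff[OF xp] cyc_funpow_eq_iff[OF zp] by auto
    then have "z \<in> cls G x" using rpg_vertex_eq_cls(2)[OF V(2) xz(2)] unfolding cls_def by simp
    then show False using rpg_vertex_eq_cls(1) V xz(1,2) cls_eq by metis
  qed
  moreover have "perm_type n z = type_pow (perm_type n x) k \<or> perm_type n x = type_pow (perm_type n z) k"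
    using xz(4) perm_type_funpow[OF xp xz(3)] perm_type_funpow[OF zp xz(3)] by auto
  ultimately show ?thesis using xz(1,2) by blast
qed

lemma kC_rpg_component_of_type_isolated:
  assumes G: "perm_subgroup n G" and I: "type_isolated n G T"
    and X: "X \<in> rpg_vertices G" "vertex_has_type n T X"
  shows "kC n (rpg_component G X) T = 1"
proof -
  have "\<not> rpg_adj G X Y" for Y
  proof
    assume "rpg_adj G X Y"
    then obtain x z a where xz: "x \<in> X" "z \<in> Y" "perm_type n x \<noteq> perm_type n z"
      "perm_type n z = type_pow (perm_type n x) a \<or> perm_type n x = type_pow (perm_type n z) a"
      using rpg_adj_perm_type_pow[OF G] by metis
    moreover have "perm_type n x = T"
      using X perm_type_eq_in_rpg_vertex xz(1) unfolding vertex_has_type_def by metis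
    moreover have "perm_type n z \<in> types0 n G"
      using rpg_vertex_eq_cls(2,3) \<open>rpg_adj G X Y\<close> xz(2) unfolding rpg_adj_def types0_def by blast
    ultimately show False using I unfolding type_isolated_def by metis
  qed
  then have "rpg_component G X = {X}"
    using rpg_component_self[OF X(1)] unfolding rpg_component_def
    by (auto elim: converse_rtranclpE)
  moreover have "{Z \<in> {X}. vertex_has_type n T Z} = {X}" using X(2) by auto
  ultimately show ?thesis unfolding kC_def by simp
qed

lemma mu_eq_card_components_mult_kC:
  assumes G: "perm_subgroup n G" and F: "fusion_controlled n G" and T: "T \<in> types0 n G"
    and C: "C \<in> {C'\<in>rpg_components G. \<exists>X\<in>C'. vertex_has_type n T X}"
  shows "mu n G T
    = card {C'\<in>rpg_components G. \<exists>X\<in>C'. vertex_has_type n T X} * kC n C T * totient (type_order T)"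
proof -
  let ?CT = "{C'\<in>rpg_components G. \<exists>X\<in>C'. vertex_has_type n T X}"
  have "(\<Sum>C'\<in>?CT. kC n C' T) = (\<Sum>C'\<in>?CT. kC n C T)"
    using kC_eq_of_fusion_controlled[OF G F] C by (intro sum.cong) auto
  then show ?thesis
    using mu_eq_card_typed_vertices[OF G T] card_typed_vertices_eq_sum_kC[OF G, of T] by simp
qed

lemma kC_pos:
  assumes G: "perm_subgroup n G" and "C \<in> rpg_components G" "\<exists>X\<in>C. vertex_has_type n T X"
  shows "kC n C T > 0"
  using assms finite_rpg_vertices[OF G] rpg_component_subset
  unfolding rpg_components_eq_image kC_def by (auto simp: card_gt_0_iff intro: finite_subset)

lemma totient_type_order_pos:
  assumes G: "perm_subgroup n G" and T: "T \<in> types0 n G" shows "totient (type_order T) > 0"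
  using T perm_order_pos[OF perm_subgroup_permutes[OF G]] unfolding types0_def perm_order_def by auto

theorem lemma6p6:
  fixes n :: nat and G :: "(nat \<Rightarrow> nat) set" and T :: "nat multiset"
  assumes "perm_subgroup n G"
    and "fusion_controlled n G"
    and "T \<in> types0 n G"
  shows "(\<forall>C\<in>rpg_components G. (\<exists>X\<in>C. vertex_has_type n T X) \<longrightarrow>
            real (card {C'\<in>rpg_components G. \<exists>X\<in>C'. vertex_has_type n T X})
              = real (mu n G T) / (real (totient (type_order T)) * real (kC n C T)))
       \<and> (type_isolated n G T \<longrightarrow>
            real (card {C'\<in>rpg_components G. \<exists>X\<in>C'. vertex_has_type n T X})
              = real (mu n G T) / real (totient (type_order T)))"
proof -
  let ?CT = "{C'\<in>rpg_components G. \<exists>X\<in>C'. vertex_has_type n T X}"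
  have general: "real (card ?CT) = real (mu n G T) / (real (totient (type_order T)) * real (kC n C T))"
    if "C \<in> ?CT" for C
    using mu_eq_card_components_mult_kC[OF assms that] kC_pos[OF assms(1)] that
      totient_type_order_pos[OF assms(1,3)] by (simp add: field_simps)
  obtain q where q: "q \<in> G" "q \<noteq> id" "perm_type n q = T" using assms(3) unfolding types0_def by auto
  then have X: "cls G q \<in> rpg_vertices G" "vertex_has_type n T (cls G q)"
    using cls_self[of q G] unfolding rpg_vertices_def vertex_has_type_def by auto
  then have "rpg_component G (cls G q) \<in> ?CT"
    using rpg_component_self unfolding rpg_components_eq_image by auto
  then have "type_isolated n G T \<Longrightarrow>
      real (card ?CT) = real (mu n G T) / real (totient (type_order T))"
    using general kC_rpg_component_of_type_isolated[OF assms(1) _ X] by simp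
  then show ?thesis using general by blast
qed

end
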